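(* Let $G$ be an always solvable graph with $n\ge 1$ vertices. Then there exists a chain of always solvable subgraphs $G=G_0\supset G_1\supset\cdots\supset G_{n-1}=K_1$, where for each $k$, $G_k$ is obtained from $G_{k-1}$ by deleting a single vertex (together with its incident edges).
   Context: For a finite simple graph $G$ with vertex set $\{v_1,\dots,v_n\}$, the closed adjacency matrix $N(G)$ is the $n\times n$ matrix over $\mathbb{Z}_2$ whose $(i,j)$ entry is $1$ iff $i=j$ or $v_i$ is adjacent to $v_j$. The nullity of $G$ is $\nu(G):=\dim\operatorname{Ker}(N(G))$ over $\mathbb{Z}_2$. $G$ is called always solvable if $\nu(G)=0$, equivalently if for every $\mathbf{c}\in\mathbb{Z}_2^{V(G)}$ there is $\mathbf{p}$ with $N(G)\mathbf{p}=\mathbf{c}$ (Lights Out game: every configuration can be turned off). *)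

theory Defs
  imports Main "HOL-Library.Z2"
begin

definition simple_graph :: "'a set \<Rightarrow> ('a \<Rightarrow> 'a \<Rightarrow> bool) \<Rightarrow> bool" where
  "simple_graph V E \<longleftrightarrow> finite V \<and> (\<forall>x\<in>V. \<forall>y\<in>V. E x y \<longleftrightarrow> E y x) \<and> (\<forall>x\<in>V. \<not> E x x)"

definition closed_adj :: "'a set \<Rightarrow> ('a \<Rightarrow> 'a \<Rightarrow> bool) \<Rightarrow> 'a \<Rightarrow> 'a \<Rightarrow> bit" where
  "closed_adj V E i j = (if i = j \<or> E i j then 1 else 0)"

definition closed_kernel :: "'a set \<Rightarrow> ('a \<Rightarrow> 'a \<Rightarrow> bool) \<Rightarrow> ('a \<Rightarrow> bit) set" where
  "closed_kernel V E = {p. (\<forall>x. x \<notin> V \<longrightarrow> p x = 0) \<and>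
       (\<forall>i\<in>V. (\<Sum>j\<in>V. closed_adj V E i j * p j) = 0)}"

text \<open>Always solvable: nullity dim Ker N(G) = 0, i.e. the kernel is the zero space.\<close>
definition always_solvable :: "'a set \<Rightarrow> ('a \<Rightarrow> 'a \<Rightarrow> bool) \<Rightarrow> bool" where
  "always_solvable V E \<longleftrightarrow> closed_kernel V E = {\<lambda>_. 0}"

end

theory Submission
  imports Defs
begin

text \<open>
  Let \<open>N\<close> be the closed adjacency matrix of an always solvable graph, so \<open>N\<close> is invertible,
  symmetric and has ones on the diagonal. If no vertex deletion kept the graph always solvable,
  then for every vertex \<open>v\<close> a nonzero kernel vector of \<open>G - v\<close> would be a solution of
  \<open>N q = e\<^sub>v\<close> with \<open>q v = 0\<close>; hence \<open>N\<^sup>-\<^sup>1\<close> would be symmetric with zero diagonal. Over \<open>\<int>\<^sub>2\<close> such a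
  matrix defines an alternating form, so \<open>y\<^sup>T N\<^sup>-\<^sup>1 y = 0\<close> for all \<open>y\<close>; but for \<open>y\<close> a column of \<open>N\<close>
  this is a diagonal entry of \<open>N\<close>, i.e. \<open>1\<close>. So some vertex can always be deleted, and iterating
  gives the chain.
\<close>

declare add_bit_eq_xor [simp del] mult_bit_eq_and [simp del]

lemma bit_add_self [simp]: "x + x = (0::bit)"
  by (cases x) simp_all

lemma sum_sum_symmetric_bit:
  fixes f :: "'a \<Rightarrow> 'a \<Rightarrow> bit"
  assumes "finite V" and "\<And>i j. i \<in> V \<Longrightarrow> j \<in> V \<Longrightarrow> f i j = f j i"
  shows "(\<Sum>i\<in>V. \<Sum>j\<in>V. f i j) = (\<Sum>i\<in>V. f i i)"
  using assms
proof (induction V rule: finite_induct)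
  case empty
  then show ?case by simp
next
  case (insert a F)
  have "(\<Sum>i\<in>F. f i a) = (\<Sum>j\<in>F. f a j)"
    using insert.prems by (intro sum.cong) auto
  then have "(\<Sum>i\<in>insert a F. \<Sum>j\<in>insert a F. f i j) = f a a + (\<Sum>i\<in>F. \<Sum>j\<in>F. f i j)"
    using insert.hyps by (simp add: sum.distrib algebra_simps)
  then show ?case
    using insert by simp
qed

lemma right_inverse_of_symmetric_is_symmetric:
  fixes N Q :: "'a \<Rightarrow> 'a \<Rightarrow> 'b::comm_semiring_1"
  assumes "finite V"
    and N_sym: "\<And>i j. i \<in> V \<Longrightarrow> j \<in> V \<Longrightarrow> N i j = N j i"
    and NQ: "\<And>i j. i \<in> V \<Longrightarrow> j \<in> V \<Longrightarrow> (\<Sum>k\<in>V. N i k * Q k j) = (if i = j then 1 else 0)"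
    and "i \<in> V" "j \<in> V"
  shows "Q i j = Q j i"
proof -
  have "Q j i = (\<Sum>k\<in>V. Q k i * (if k = j then 1 else 0))"
    using \<open>finite V\<close> \<open>j \<in> V\<close> by (simp flip: of_bool_def)
  also have "\<dots> = (\<Sum>k\<in>V. \<Sum>l\<in>V. Q k i * N k l * Q l j)"
    using NQ \<open>j \<in> V\<close> by (intro sum.cong) (simp_all add: mult.assoc flip: sum_distrib_left)
  also have "\<dots> = (\<Sum>l\<in>V. \<Sum>k\<in>V. Q k i * N k l * Q l j)"
    by (rule sum.swap)
  also have "\<dots> = (\<Sum>l\<in>V. (\<Sum>k\<in>V. N l k * Q k i) * Q l j)"
    using N_sym by (auto simp: sum_distrib_left sum_distrib_right mult_ac intro!: sum.cong)
  also have "\<dots> = (\<Sum>l\<in>V. (if l = i then 1 else 0) * Q l j)"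
    using NQ \<open>i \<in> V\<close> by simp
  also have "\<dots> = Q i j"
    using \<open>finite V\<close> \<open>i \<in> V\<close> by (simp flip: of_bool_def)
  finally show ?thesis ..
qed

lemma inverse_of_symmetric_bit_matrix_has_nonzero_diagonal:
  fixes N Q :: "'a \<Rightarrow> 'a \<Rightarrow> bit"
  assumes "finite V" and "a \<in> V" and "N a a = 1"
    and N_sym: "\<And>i j. i \<in> V \<Longrightarrow> j \<in> V \<Longrightarrow> N i j = N j i"
    and NQ: "\<And>i j. i \<in> V \<Longrightarrow> j \<in> V \<Longrightarrow> (\<Sum>k\<in>V. N i k * Q k j) = (if i = j then 1 else 0)"
  shows "\<exists>v\<in>V. Q v v = 1"
proof (rule ccontr)
  assume "\<not> ?thesis"
  then have Q_diag: "Q v v = 0" if "v \<in> V" for v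
    using that by simp
  have Q_sym: "Q k l = Q l k" if "k \<in> V" "l \<in> V" for k l
    using right_inverse_of_symmetric_is_symmetric[OF \<open>finite V\<close> N_sym NQ that] .
  have "(1::bit) = (\<Sum>l\<in>V. (if a = l then 1 else 0) * N l a)"
    using \<open>finite V\<close> \<open>a \<in> V\<close> \<open>N a a = 1\<close> by (simp flip: of_bool_def)
  also have "\<dots> = (\<Sum>l\<in>V. (\<Sum>k\<in>V. N a k * Q k l) * N l a)"
    using NQ \<open>a \<in> V\<close> by simp
  also have "\<dots> = (\<Sum>k\<in>V. \<Sum>l\<in>V. N a k * Q k l * N l a)"
    by (subst sum.swap) (simp add: sum_distrib_right)
  also have "\<dots> = (\<Sum>k\<in>V. N a k * Q k k * N k a)"
  proof (rule sum_sum_symmetric_bit[OF \<open>finite V\<close>])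
    fix k l assume "k \<in> V" "l \<in> V"
    then show "N a k * Q k l * N l a = N a l * Q l k * N k a"
      using \<open>a \<in> V\<close> N_sym[of a k] N_sym[of l a] Q_sym[of k l] by (simp only: mult_ac)
  qed
  also have "\<dots> = 0"
    by (simp add: Q_diag)
  finally show False
    by simp
qed

lemma simple_graph_subset: "simple_graph V E \<Longrightarrow> W \<subseteq> V \<Longrightarrow> simple_graph W E"
  by (auto simp: simple_graph_def intro: finite_subset)

lemma closed_adj_sym: "simple_graph V E \<Longrightarrow> i \<in> V \<Longrightarrow> j \<in> V \<Longrightarrow> closed_adj V E i j = closed_adj V E j i"
  by (auto simp: simple_graph_def closed_adj_def)

lemma unit_preimage_vanishing_at_deleted_vertex:
  assumes "finite V" and "v \<in> V" and "always_solvable V E" and "\<not> always_solvable (V - {v}) E"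
  shows "\<exists>q. q v = 0 \<and> (\<forall>i\<in>V. (\<Sum>j\<in>V. closed_adj V E i j * q j) = (if i = v then 1 else 0))"
proof -
  have "(\<lambda>_. 0) \<in> closed_kernel (V - {v}) E"
    by (simp add: closed_kernel_def)
  with assms(4) obtain q where q: "q \<in> closed_kernel (V - {v}) E" and "q \<noteq> (\<lambda>_. 0)"
    unfolding always_solvable_def by blast
  have q_outside: "q x = 0" if "x \<notin> V - {v}" for x
    using q that by (simp add: closed_kernel_def)
  have Nq: "(\<Sum>j\<in>V. closed_adj V E i j * q j) = (\<Sum>j\<in>V - {v}. closed_adj (V - {v}) E i j * q j)" for i
    using \<open>finite V\<close> \<open>v \<in> V\<close> q_outside by (simp add: sum.remove closed_adj_def)
  have "(\<Sum>j\<in>V. closed_adj V E v j * q j) \<noteq> 0"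
  proof
    assume "(\<Sum>j\<in>V. closed_adj V E v j * q j) = 0"
    with q q_outside Nq have "q \<in> closed_kernel V E"
      unfolding closed_kernel_def by auto
    with \<open>always_solvable V E\<close> \<open>q \<noteq> (\<lambda>_. 0)\<close> show False
      by (simp add: always_solvable_def)
  qed
  moreover have "(\<Sum>j\<in>V. closed_adj V E i j * q j) = 0" if "i \<in> V - {v}" for i
    using q that by (simp add: Nq closed_kernel_def)
  ultimately show ?thesis
    using q_outside by auto
qed

lemma always_solvable_delete_vertex:
  assumes "simple_graph V E" and "always_solvable V E" and "V \<noteq> {}"
  shows "\<exists>v\<in>V. always_solvable (V - {v}) E"
proof (rule ccontr)
  assume no_deletion: "\<not> ?thesis"
  have "finite V"
    using \<open>simple_graph V E\<close> by (simp add: simple_graph_def)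
  have "\<forall>v\<in>V. \<exists>q. q v = 0 \<and>
          (\<forall>i\<in>V. (\<Sum>j\<in>V. closed_adj V E i j * q j) = (if i = v then 1 else 0))"
    using unit_preimage_vanishing_at_deleted_vertex[OF \<open>finite V\<close> _ \<open>always_solvable V E\<close>]
      no_deletion by blast
  then obtain q where q_diag: "\<And>v. v \<in> V \<Longrightarrow> q v v = 0"
    and q_inverse: "\<And>i v. i \<in> V \<Longrightarrow> v \<in> V \<Longrightarrow>
          (\<Sum>j\<in>V. closed_adj V E i j * q v j) = (if i = v then 1 else 0)"
    by metis
  obtain a where "a \<in> V"
    using \<open>V \<noteq> {}\<close> by blast
  have "closed_adj V E a a = 1"
    by (simp add: closed_adj_def)
  then have "\<exists>v\<in>V. q v v = 1"
    using inverse_of_symmetric_bit_matrix_has_nonzero_diagonal[where Q = "\<lambda>j v. q v j"]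
      \<open>finite V\<close> \<open>a \<in> V\<close> closed_adj_sym[OF \<open>simple_graph V E\<close>] q_inverse
    by blast
  then show False
    using q_diag by fastforce
qed

lemma vertex_deletion_chain:
  fixes V :: "'a set"
  assumes "card V \<ge> 1" and "P V"
    and step: "\<And>W. card W \<ge> 2 \<Longrightarrow> P W \<Longrightarrow> \<exists>v\<in>W. P (W - {v})"
  shows "\<exists>Vs :: 'a set list.
           length Vs = card V \<and>
           Vs ! 0 = V \<and>
           (\<forall>k < card V. P (Vs ! k)) \<and>
           (\<forall>k. 1 \<le> k \<and> k < card V \<longrightarrow>
                (\<exists>v \<in> Vs ! (k - 1). Vs ! k = Vs ! (k - 1) - {v})) \<and>
           card (Vs ! (card V - 1)) = 1"
proof -
  obtain n where "card V = Suc n"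
    using \<open>card V \<ge> 1\<close> by (cases "card V") auto
  then show ?thesis
    using \<open>P V\<close>
  proof (induction n arbitrary: V)
    case 0
    then show ?case
      by (intro exI[of _ "[V]"]) auto
  next
    case (Suc n)
    then obtain v where "v \<in> V" and "P (V - {v})"
      using step[of V] by auto
    moreover have "card (V - {v}) = Suc n"
      using Suc.prems(1) \<open>v \<in> V\<close> by (simp add: card_Diff_singleton_if)
    ultimately obtain Ws where Ws: "length Ws = Suc n" "Ws ! 0 = V - {v}"
        "\<forall>k < Suc n. P (Ws ! k)"
        "\<forall>k. 1 \<le> k \<and> k < Suc n \<longrightarrow> (\<exists>w \<in> Ws ! (k - 1). Ws ! k = Ws ! (k - 1) - {w})"
        "card (Ws ! n) = 1"
      using Suc.IH by (simp only: diff_Suc_1) blast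
    show ?case
    proof (intro exI[of _ "V # Ws"] conjI allI impI)
      show "length (V # Ws) = card V" and "(V # Ws) ! 0 = V"
        and "card ((V # Ws) ! (card V - 1)) = 1"
        using Ws(1,5) Suc.prems(1) by simp_all
    next
      fix k assume "k < card V"
      then show "P ((V # Ws) ! k)"
        using Ws(3) Suc.prems by (cases k) simp_all
    next
      fix k assume "1 \<le> k \<and> k < card V"
      then consider "k = 1" | m where "k = Suc (Suc m)" and "Suc m < Suc n"
        using Suc.prems(1) by (cases k; cases "k - 1") auto
      then show "\<exists>w \<in> (V # Ws) ! (k - 1). (V # Ws) ! k = (V # Ws) ! (k - 1) - {w}"
      proof cases
        case 1
        then show ?thesis
          using \<open>v \<in> V\<close> Ws(2) by auto
      next
        case 2
        then show ?thesis
          using Ws(4)[rule_format, of "Suc m"] by simp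
      qed
    qed
  qed
qed

theorem corollary2p9:
  fixes V :: "'a set" and E :: "'a \<Rightarrow> 'a \<Rightarrow> bool"
  assumes "simple_graph V E"
    and "card V \<ge> 1"
    and "always_solvable V E"
  shows "\<exists>Vs :: 'a set list.
           length Vs = card V \<and>
           Vs ! 0 = V \<and>
           (\<forall>k < card V. always_solvable (Vs ! k) E) \<and>
           (\<forall>k. 1 \<le> k \<and> k < card V \<longrightarrow>
                (\<exists>v \<in> Vs ! (k - 1). Vs ! k = Vs ! (k - 1) - {v})) \<and>
           card (Vs ! (card V - 1)) = 1"
proof -
  have step: "\<exists>v\<in>W. simple_graph (W - {v}) E \<and> always_solvable (W - {v}) E"
    if "card W \<ge> 2" and "simple_graph W E \<and> always_solvable W E" for W
  proof -
    have "W \<noteq> {}"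
      using \<open>card W \<ge> 2\<close> by auto
    then show ?thesis
      using that always_solvable_delete_vertex[of W E] simple_graph_subset[of W E] by blast
  qed
  obtain Vs where "length Vs = card V" "Vs ! 0 = V"
      "\<forall>k < card V. simple_graph (Vs ! k) E \<and> always_solvable (Vs ! k) E"
      "\<forall>k. 1 \<le> k \<and> k < card V \<longrightarrow> (\<exists>v \<in> Vs ! (k - 1). Vs ! k = Vs ! (k - 1) - {v})"
      "card (Vs ! (card V - 1)) = 1"
    using vertex_deletion_chain[where P = "\<lambda>W. simple_graph W E \<and> always_solvable W E", OF _ _ step]
      assms by blast
  then show ?thesis
    by blast
qed

end
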